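(* Let $\sigma$ be a permutation of $[n]$. Then every interval of integers of length $\sqrt{32\,n\,D(\sigma)}$ contained in $[n]$ contains an element of $A_\sigma$.
   Context: $[n]=\{1,\dots,n\}$, identified with $\mathbb{Z}_n$. For $k\in[n]$, $B_\sigma(k)=|\{1\le q\le k:\sigma(q)\le\sigma(k)\}|$ and $A_\sigma=\{B_\sigma(k):k\in[n]\}$. An interval of $\mathbb{Z}_n$ is any subset that is the image of an interval of consecutive integers under the projection $\mathbb{Z}\to\mathbb{Z}_n$ (wrap-around allowed). For $S,T\subseteq\mathbb{Z}_n$, $D_T(S)=\bigl|\,|S\cap T|-|S||T|/n\,\bigr|$, and $D(\sigma)=\max_{I,J}D_J(\sigma(I))$ over all intervals $I,J$ of $\mathbb{Z}_n$. *)

theory Defs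
  imports Complex_Main "HOL-Combinatorics.Permutations"
begin

(* [n] = {1..n} identified with Z_n via k \<mapsto> k mod n; the projection Z \<rightarrow> [n] *)
definition proj_n :: "nat \<Rightarrow> int \<Rightarrow> nat" where
  "proj_n n x = nat ((x - 1) mod int n) + 1"

(* intervals of Z_n (as subsets of [n]): images of runs of consecutive integers, wrap-around allowed *)
definition zn_intervals :: "nat \<Rightarrow> nat set set" where
  "zn_intervals n = {proj_n n ` {a..<a + int m} | a m. True}"

definition Bsig :: "(nat \<Rightarrow> nat) \<Rightarrow> nat \<Rightarrow> nat" where
  "Bsig \<sigma> k = card {q. 1 \<le> q \<and> q \<le> k \<and> \<sigma> q \<le> \<sigma> k}"

definition Asig :: "nat \<Rightarrow> (nat \<Rightarrow> nat) \<Rightarrow> nat set" where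
  "Asig n \<sigma> = Bsig \<sigma> ` {1..n}"

definition discr :: "nat \<Rightarrow> nat set \<Rightarrow> nat set \<Rightarrow> real" where
  "discr n T S = \<bar>real (card (S \<inter> T)) - real (card S) * real (card T) / real n\<bar>"

definition Dsig :: "nat \<Rightarrow> (nat \<Rightarrow> nat) \<Rightarrow> real" where
  "Dsig n \<sigma> = Max {discr n J (\<sigma> ` I) | I J. I \<in> zn_intervals n \<and> J \<in> zn_intervals n}"

end

theory Submission
  imports Defs
begin

(*
  Write c(k, v) = prefix_count \<sigma> k v for the number of positions q \<le> k with \<sigma> q \<le> v.
  The prefix intervals [1, k] and [1, v] give |c(k, v) - k v / n| \<le> D. Suppose A_\<sigma> misses
  [a, b], of length L. A position q > k with v < \<sigma> q \<le> b has c(k, v) + 1 \<le> B_\<sigma>(q) \<le> \<sigma> q \<le> b,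
  so as soon as c(k, v) \<ge> a - 1 all b - v values in (v, b] occur at positions \<le> k. Then
  c(k, b) = c(k, v) + (b - v), and comparing both counts with their expected values yields
  (n - k)(b - v) \<le> 2 n D. Choosing n - k \<approx> n (L - D) / (2 b) and b - v \<approx> (L - D) / 2 keeps
  k v / n \<ge> a - 1 + D, which forces c(k, v) \<ge> a - 1, while (n - k)(b - v) > L^2 / 16 \<ge> 2 n D.
  The estimates need L to be large: B_\<sigma>(1) = 1 gives a \<ge> 2, and singleton intervals give
  D \<ge> 1 - 1/n \<ge> 1/2.
*)

lemma proj_n_eq_self: "1 \<le> x \<Longrightarrow> x \<le> n \<Longrightarrow> proj_n n (int x) = x"
  unfolding proj_n_def by simp

lemma proj_n_in_range:
  assumes "1 \<le> n"
  shows "proj_n n x \<in> {1..n}"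
proof -
  have "0 \<le> (x - 1) mod int n" and "(x - 1) mod int n < int n"
    using assms by simp_all
  then show ?thesis unfolding proj_n_def by auto
qed

lemma prefix_in_zn_intervals:
  assumes "k \<le> n"
  shows "{1..k} \<in> zn_intervals n"
proof -
  have "{1..<1 + int k} = int ` {1..k}"
    using image_int_atLeastLessThan[of 1 "Suc k"] by (simp add: atLeastLessThanSuc_atLeastAtMost)
  moreover have "(\<lambda>x. proj_n n (int x)) ` {1..k} = {1..k}"
    using assms by (simp add: proj_n_eq_self)
  ultimately have "proj_n n ` {1..<1 + int k} = {1..k}"
    by (simp add: image_image)
  then show ?thesis unfolding zn_intervals_def by blast
qed

lemma singleton_in_zn_intervals:
  assumes "1 \<le> x" and "x \<le> n"
  shows "{x} \<in> zn_intervals n"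
proof -
  have "{int x..<int x + int 1} = {int x}" by auto
  then have "proj_n n ` {int x..<int x + int 1} = {x}"
    using proj_n_eq_self[OF assms] by simp
  then show ?thesis unfolding zn_intervals_def by blast
qed

lemma finite_zn_intervals:
  assumes "1 \<le> n"
  shows "finite (zn_intervals n)"
proof (rule finite_subset)
  show "zn_intervals n \<subseteq> Pow {1..n}"
    unfolding zn_intervals_def using proj_n_in_range[OF assms] by blast
qed simp

lemma discr_le_Dsig:
  assumes "1 \<le> n" and "I \<in> zn_intervals n" and "J \<in> zn_intervals n"
  shows "discr n J (\<sigma> ` I) \<le> Dsig n \<sigma>"
proof -
  have "{discr n J (\<sigma> ` I) | I J. I \<in> zn_intervals n \<and> J \<in> zn_intervals n}
      = (\<lambda>(I, J). discr n J (\<sigma> ` I)) ` (zn_intervals n \<times> zn_intervals n)"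
    by auto
  then have "finite {discr n J (\<sigma> ` I) | I J. I \<in> zn_intervals n \<and> J \<in> zn_intervals n}"
    using finite_zn_intervals[OF assms(1)] by simp
  then show ?thesis
    unfolding Dsig_def by (rule Max_ge) (use assms in blast)
qed

lemma Dsig_ge_one_minus_inverse:
  assumes "\<sigma> permutes {1..n}" and "1 \<le> n"
  shows "1 - 1 / real n \<le> Dsig n \<sigma>"
proof -
  have "\<sigma> 1 \<in> {1..n}" using permutes_in_image[OF assms(1)] assms(2) by simp
  then have "discr n {\<sigma> 1} (\<sigma> ` {1}) \<le> Dsig n \<sigma>"
    using assms(2) by (intro discr_le_Dsig singleton_in_zn_intervals) auto
  then show ?thesis unfolding discr_def by simp
qed

definition prefix_count :: "(nat \<Rightarrow> nat) \<Rightarrow> nat \<Rightarrow> nat \<Rightarrow> nat" where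
  "prefix_count \<sigma> k v = card {q \<in> {1..k}. \<sigma> q \<le> v}"

lemma Bsig_eq_prefix_count: "Bsig \<sigma> k = prefix_count \<sigma> k (\<sigma> k)"
  unfolding Bsig_def prefix_count_def by (rule arg_cong[where f = card]) auto

lemma one_in_Asig:
  assumes "1 \<le> n"
  shows "1 \<in> Asig n \<sigma>"
proof -
  have "{q \<in> {1..1}. \<sigma> q \<le> \<sigma> 1} = {1}" by auto
  then have "Bsig \<sigma> 1 = 1" by (simp add: Bsig_eq_prefix_count prefix_count_def)
  with assms show ?thesis unfolding Asig_def by force
qed

lemma card_preimage_permutes:
  assumes "\<sigma> permutes A" and "S \<subseteq> A"
  shows "card {q \<in> A. \<sigma> q \<in> S} = card S"
proof -
  have "{q \<in> A. \<sigma> q \<in> S} = \<sigma> -` S"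
    using assms permutes_in_image[OF assms(1)] by (auto simp: permutes_not_in)
  then show ?thesis
    using assms by (simp add: card_vimage_inj permutes_inj permutes_surj)
qed

lemma prefix_count_full:
  assumes "\<sigma> permutes {1..n}" and "v \<le> n"
  shows "prefix_count \<sigma> n v = v"
proof -
  have "{q \<in> {1..n}. \<sigma> q \<le> v} = {q \<in> {1..n}. \<sigma> q \<in> {1..v}}"
    using permutes_in_image[OF assms(1)] by auto
  then show ?thesis
    using card_preimage_permutes[OF assms(1), of "{1..v}"] assms(2)
    by (simp add: prefix_count_def)
qed

lemma prefix_count_discrepancy:
  assumes "\<sigma> permutes {1..n}" and "1 \<le> n" and "k \<le> n" and "v \<le> n"
  shows "\<bar>real (prefix_count \<sigma> k v) - real k * real v / real n\<bar> \<le> Dsig n \<sigma>"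
proof -
  have inj: "inj_on \<sigma> {1..k}"
    using permutes_inj[OF assms(1)] by (rule inj_on_subset) simp
  have "\<sigma> ` {1..k} \<inter> {1..v} = \<sigma> ` {q \<in> {1..k}. \<sigma> q \<le> v}"
    using permutes_in_image[OF assms(1)] assms(3) by fastforce
  then have "card (\<sigma> ` {1..k} \<inter> {1..v}) = prefix_count \<sigma> k v"
    unfolding prefix_count_def by (auto intro!: card_image inj_on_subset[OF inj])
  moreover have "card (\<sigma> ` {1..k}) = k" using card_image[OF inj] by simp
  moreover have "discr n {1..v} (\<sigma> ` {1..k}) \<le> Dsig n \<sigma>"
    using assms by (intro discr_le_Dsig prefix_in_zn_intervals)
  ultimately show ?thesis unfolding discr_def by simp
qed

lemma prefix_count_mono:
  assumes "k \<le> k'" and "v \<le> v'"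
  shows "prefix_count \<sigma> k v \<le> prefix_count \<sigma> k' v'"
  unfolding prefix_count_def using assms by (intro card_mono) auto

lemma Bsig_le_value:
  assumes "\<sigma> permutes {1..n}" and "q \<le> n" and "\<sigma> q \<le> n"
  shows "Bsig \<sigma> q \<le> \<sigma> q"
  using prefix_count_mono[OF assms(2) order_refl, of \<sigma> "\<sigma> q"]
  by (simp add: Bsig_eq_prefix_count prefix_count_full[OF assms(1,3)])

lemma gap_values_in_prefix:
  assumes "\<sigma> permutes {1..n}" and "{a..b} \<inter> Asig n \<sigma> = {}"
    and "a \<le> prefix_count \<sigma> k v + 1"
    and "q \<in> {1..n}" and "v < \<sigma> q" and "\<sigma> q \<le> b"
  shows "q \<le> k"
proof (rule ccontr)
  assume "\<not> q \<le> k"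
  then have "insert q {q' \<in> {1..k}. \<sigma> q' \<le> v} \<subseteq> {q' \<in> {1..q}. \<sigma> q' \<le> \<sigma> q}"
    using assms(4,5) by auto
  then have "card (insert q {q' \<in> {1..k}. \<sigma> q' \<le> v}) \<le> Bsig \<sigma> q"
    unfolding Bsig_eq_prefix_count prefix_count_def by (intro card_mono) auto
  with \<open>\<not> q \<le> k\<close> have "a \<le> Bsig \<sigma> q"
    using assms(3) by (simp add: prefix_count_def)
  moreover have "Bsig \<sigma> q \<le> b"
    using Bsig_le_value[OF assms(1)] permutes_in_image[OF assms(1)] assms(4,6) by force
  moreover have "Bsig \<sigma> q \<in> Asig n \<sigma>"
    using assms(4) by (simp add: Asig_def)
  ultimately show False using assms(2) by auto
qed

lemma prefix_count_add_gap:
  assumes "\<sigma> permutes {1..n}" and "k \<le> n" and "v \<le> b" and "b \<le> n"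
    and "\<And>q. q \<in> {1..n} \<Longrightarrow> v < \<sigma> q \<Longrightarrow> \<sigma> q \<le> b \<Longrightarrow> q \<le> k"
  shows "prefix_count \<sigma> k b = prefix_count \<sigma> k v + (b - v)"
proof -
  have "{q \<in> {1..k}. \<sigma> q \<le> b}
      = {q \<in> {1..k}. \<sigma> q \<le> v} \<union> {q \<in> {1..n}. \<sigma> q \<in> {v<..b}}"
    using assms(2,3,5) by force
  then have "prefix_count \<sigma> k b
      = prefix_count \<sigma> k v + card {q \<in> {1..n}. \<sigma> q \<in> {v<..b}}"
    unfolding prefix_count_def by (simp add: card_Un_disjoint disjoint_iff)
  also have "card {q \<in> {1..n}. \<sigma> q \<in> {v<..b}} = b - v"
    using card_preimage_permutes[OF assms(1), of "{v<..b}"] assms(4) by force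
  finally show ?thesis .
qed

lemma gap_product_le_Dsig:
  assumes "\<sigma> permutes {1..n}" and "1 \<le> n" and "k \<le> n" and "v \<le> b" and "b \<le> n"
    and "prefix_count \<sigma> k b = prefix_count \<sigma> k v + (b - v)"
  shows "real (n - k) * real (b - v) \<le> 2 * real n * Dsig n \<sigma>"
proof -
  have "\<bar>real (prefix_count \<sigma> k b) - real k * real b / real n\<bar> \<le> Dsig n \<sigma>"
    and "\<bar>real (prefix_count \<sigma> k v) - real k * real v / real n\<bar> \<le> Dsig n \<sigma>"
    using assms by (intro prefix_count_discrepancy; simp)+
  moreover have "real k * real b / real n - real k * real v / real n = real k * real (b - v) / real n"
    using assms(4) by (simp add: of_nat_diff diff_divide_distrib algebra_simps)
  ultimately have "real (b - v) \<le> real k * real (b - v) / real n + 2 * Dsig n \<sigma>"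
    using assms(6) by (simp add: abs_le_iff)
  then have "real n * real (b - v) \<le> real k * real (b - v) + 2 * real n * Dsig n \<sigma>"
    using assms(2) by (simp add: field_simps)
  then show ?thesis
    using assms(3) by (simp add: of_nat_diff algebra_simps)
qed

lemma nat_floor_exists:
  fixes x :: real
  assumes "0 \<le> x"
  obtains m :: nat where "real m \<le> x" and "x - 1 < real m"
proof
  show "real (nat \<lfloor>x\<rfloor>) \<le> x" and "x - 1 < real (nat \<lfloor>x\<rfloor>)"
    using assms by linarith+
qed

lemma gap_parameters_exist:
  fixes n b :: nat and L D :: real
  assumes "2 \<le> n" and "b \<le> n" and "0 \<le> L" and "L \<le> real b"
    and "1 / 2 \<le> D" and "32 * real n * D \<le> L\<^sup>2"
  obtains k v :: nat where "k \<le> n" and "v \<le> b"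
    and "real n * (real b - L + D) \<le> real k * real v"
    and "2 * real n * D < real (n - k) * real (b - v)"
proof -
  have "L\<^sup>2 \<le> real n * L"
    unfolding power2_eq_square using assms(2-4) by (intro mult_right_mono) auto
  then have "real n * (32 * D) \<le> real n * L"
    using assms(6) by (simp add: algebra_simps)
  then have D_le: "D \<le> L / 32"
    using assms(1) by simp
  have "32 * real n * (1 / 2) \<le> 32 * real n * D"
    using assms(5) by (intro mult_left_mono) auto
  moreover have "2 \<le> real n" using assms(1) by simp
  ultimately have "25 \<le> L\<^sup>2" using assms(6) by linarith
  then have L_ge: "5 \<le> L" using power2_le_imp_le[of 5 L] assms(3) by simp
  then have b_pos: "0 < real b" using assms(4) by simp
  define M where "M = (L - D) / 2"
  have M_ge: "L / 4 \<le> M - 1" unfolding M_def using D_le L_ge by (simp add: field_simps)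
  have "real b * M \<le> real n * M"
    using assms(2) M_ge L_ge by (intro mult_right_mono) auto
  then have "M \<le> real n * M / real b"
    using b_pos by (simp add: pos_le_divide_eq mult.commute)
  obtain w :: nat where w: "real w \<le> M" "M - 1 < real w"
    using nat_floor_exists[of M] M_ge L_ge by auto
  obtain u :: nat where u: "real u \<le> real n * M / real b" "real n * M / real b - 1 < real u"
    using nat_floor_exists[of "real n * M / real b"] M_ge L_ge b_pos by auto
  have "M \<le> real b" unfolding M_def using assms(4,5) D_le by simp
  then have "real n * M \<le> real n * real b" by (intro mult_left_mono) auto
  then have "real n * M / real b \<le> real n"
    using b_pos by (simp add: pos_divide_le_eq)
  then have "u \<le> n" using u(1) of_nat_le_iff by fastforce
  moreover have "w \<le> b" using w(1) \<open>M \<le> real b\<close> by simp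
  moreover have "real n * (real b - L + D) \<le> real (n - u) * real (b - w)"
  proof -
    have "real u * real b \<le> real n * M" using u(1) b_pos by (simp add: field_simps)
    moreover have "real n * real w \<le> real n * M" using w(1) by (simp add: mult_left_mono)
    moreover have "0 \<le> real u * real w" by simp
    moreover have "real (n - u) * real (b - w)
        = real n * real b - real u * real b - real n * real w + real u * real w"
      using \<open>u \<le> n\<close> \<open>w \<le> b\<close> by (simp add: algebra_simps)
    moreover have "real n * (real b - L + D) = real n * real b - 2 * (real n * M)"
      by (simp add: M_def field_simps)
    ultimately show ?thesis by linarith
  qed
  moreover have "2 * real n * D < real u * real w"
  proof -
    have "L / 4 < real u" and "L / 4 < real w"
      using u(2) w(2) M_ge \<open>M \<le> real n * M / real b\<close> by linarith+
    then have "(L / 4) * (L / 4) < real u * real w"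
      using L_ge by (intro mult_strict_mono) auto
    then show ?thesis using assms(6) by (simp add: power2_eq_square)
  qed
  ultimately show ?thesis
    using that[of "n - u" "b - w"] by simp
qed

lemma Asig_gap_product_le_Dsig:
  assumes "\<sigma> permutes {1..n}" and "1 \<le> n" and "{a..b} \<inter> Asig n \<sigma> = {}"
    and "b \<le> n" and "k \<le> n" and "v \<le> b"
    and "real n * (real a - 1 + Dsig n \<sigma>) \<le> real k * real v"
  shows "real (n - k) * real (b - v) \<le> 2 * real n * Dsig n \<sigma>"
proof -
  have "real a - 1 + Dsig n \<sigma> \<le> real k * real v / real n"
    using assms(2,7) by (simp add: field_simps)
  moreover have "real k * real v / real n - Dsig n \<sigma> \<le> real (prefix_count \<sigma> k v)"
    using prefix_count_discrepancy[OF assms(1,2,5), of v] assms(4,6) by linarith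
  ultimately have "a \<le> prefix_count \<sigma> k v + 1" by linarith
  then have "prefix_count \<sigma> k b = prefix_count \<sigma> k v + (b - v)"
    using gap_values_in_prefix[OF assms(1,3)] assms(4-6)
    by (intro prefix_count_add_gap[OF assms(1)]) auto
  then show ?thesis
    using gap_product_le_Dsig[OF assms(1,2,5,6,4)] by simp
qed

theorem mainTheorem17:
  fixes n :: nat and \<sigma> :: "nat \<Rightarrow> nat" and a b :: nat
  assumes "\<sigma> permutes {1..n}"
    and "1 \<le> a" and "a \<le> b" and "b \<le> n"
    and "real (card {a..b}) \<ge> sqrt (32 * real n * Dsig n \<sigma>)"
  shows "\<exists>x\<in>{a..b}. x \<in> Asig n \<sigma>"
proof (rule ccontr)
  assume "\<not> (\<exists>x\<in>{a..b}. x \<in> Asig n \<sigma>)"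
  then have gap: "{a..b} \<inter> Asig n \<sigma> = {}" by blast
  have "1 \<le> n" using assms(2-4) by simp
  then have "a \<noteq> 1" using one_in_Asig gap assms(3) by fastforce
  then have "2 \<le> n" using assms(2-4) by simp
  then have "1 / real n \<le> 1 / 2" by simp
  then have "1 / 2 \<le> Dsig n \<sigma>"
    using Dsig_ge_one_minus_inverse[OF assms(1) \<open>1 \<le> n\<close>] by linarith
  define L where "L = real (card {a..b})"
  have L_eq: "L = real b - real a + 1"
    using assms(3) by (simp add: L_def of_nat_diff)
  have "32 * real n * Dsig n \<sigma> \<le> L\<^sup>2"
    using sqrt_le_D[OF assms(5)] by (simp add: L_def)
  then obtain k v where "k \<le> n" and "v \<le> b"
    and "real n * (real a - 1 + Dsig n \<sigma>) \<le> real k * real v"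
    and "2 * real n * Dsig n \<sigma> < real (n - k) * real (b - v)"
    using gap_parameters_exist[of n b L "Dsig n \<sigma>"] \<open>2 \<le> n\<close> \<open>1 / 2 \<le> Dsig n \<sigma>\<close> assms(2-4)
    by (auto simp: L_eq)
  then show False
    using Asig_gap_product_le_Dsig[OF assms(1) \<open>1 \<le> n\<close> gap assms(4)] by fastforce
qed

end
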